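(* Let $0\le\lambda<\gamma\le\delta$. Let $\mathfrak{f}\in\mathcal{R}_H^0(\gamma,\delta,\lambda)$ and let $\varphi\in\mathcal{A}$ be such that $\mathrm{Re}\left(\frac{\varphi(z)}{z}\right)>\frac12$ for all $z\in\mathcal{U}$. Then $\mathfrak{f}\,\widetilde{\ast}\,\varphi\in\mathcal{R}_H^0(\gamma,\delta,\lambda)$.
   Context: Let $\mathcal{U}=\{z\in\mathbb{C}:|z|<1\}$ and let $\mathcal{A}$ be the class of analytic functions $F$ in $\mathcal{U}$ with $F(0)=0$, $F'(0)=1$. $\mathcal{H}^0$ denotes the class of complex-valued harmonic functions $\mathfrak{f}=\mathfrak{s}+\overline{\mathfrak{t}}$ on $\mathcal{U}$, where $\mathfrak{s}(z)=z+\sum_{m\ge2}a_mz^m$ and $\mathfrak{t}(z)=\sum_{m\ge2}b_mz^m$ are analytic in $\mathcal{U}$. For real $0\le\lambda<\gamma\le\delta$, $\mathcal{R}_H^0(\gamma,\delta,\lambda)$ is the class of $\mathfrak{f}=\mathfrak{s}+\overline{\mathfrak{t}}\in\mathcal{H}^0$ such that for all $z\in\mathcal{U}$, $\mathrm{Re}\left[\gamma\mathfrak{s}'(z)+\delta z\mathfrak{s}''(z)+\frac{\delta-\gamma}{2}z^2\mathfrak{s}'''(z)-\lambda\right]>\left|\gamma\mathfrak{t}'(z)+\delta z\mathfrak{t}''(z)+\frac{\delta-\gamma}{2}z^2\mathfrak{t}'''(z)\right|$. For analytic $g(z)=\sum c_mz^m$, $h(z)=\sum d_mz^m$, $(g\ast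 h)(z)=\sum c_md_mz^m$. For harmonic $\mathfrak{f}=\mathfrak{s}+\overline{\mathfrak{t}}$ and analytic $\varphi$, $\mathfrak{f}\,\widetilde{\ast}\,\varphi=\mathfrak{s}\ast\varphi+\overline{\mathfrak{t}\ast\varphi}$. Here $\varphi(z)/z$ at $z=0$ means its limiting value $1$. *)

theory Defs
  imports "HOL-Analysis.Analysis"
begin

definition unit_disc :: "complex set" where
  "unit_disc = ball 0 1"

definition taylor_coeff :: "(complex \<Rightarrow> complex) \<Rightarrow> nat \<Rightarrow> complex" where
  "taylor_coeff g n = (deriv ^^ n) g 0 / of_nat (fact n)"

definition hadamard :: "(complex \<Rightarrow> complex) \<Rightarrow> (complex \<Rightarrow> complex) \<Rightarrow> complex \<Rightarrow> complex" where
  "hadamard g h z = (\<Sum>m. taylor_coeff g m * taylor_coeff h m * z ^ m)"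

definition class_A :: "(complex \<Rightarrow> complex) set" where
  "class_A = {F. F holomorphic_on unit_disc \<and> F 0 = 0 \<and> deriv F 0 = 1}"

(* H^0: harmonic f = s + conj t, represented by the pair (s,t),
   s(z) = z + sum_{m>=2} a_m z^m,  t(z) = sum_{m>=2} b_m z^m *)
definition class_H0 :: "((complex \<Rightarrow> complex) \<times> (complex \<Rightarrow> complex)) set" where
  "class_H0 = {(s, t). s holomorphic_on unit_disc \<and> s 0 = 0 \<and> deriv s 0 = 1 \<and>
                       t holomorphic_on unit_disc \<and> t 0 = 0 \<and> deriv t 0 = 0}"

definition Lop :: "real \<Rightarrow> real \<Rightarrow> (complex \<Rightarrow> complex) \<Rightarrow> complex \<Rightarrow> complex" where
  "Lop \<gamma> \<delta> g z = of_real \<gamma> * deriv g z + of_real \<delta> * z * (deriv ^^ 2) g z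
       + of_real ((\<delta> - \<gamma>) / 2) * z ^ 2 * (deriv ^^ 3) g z"

definition class_RH0 :: "real \<Rightarrow> real \<Rightarrow> real \<Rightarrow> ((complex \<Rightarrow> complex) \<times> (complex \<Rightarrow> complex)) set" where
  "class_RH0 \<gamma> \<delta> lam = {(s, t). (s, t) \<in> class_H0 \<and>
      (\<forall>z\<in>unit_disc. Re (Lop \<gamma> \<delta> s z - of_real lam) > cmod (Lop \<gamma> \<delta> t z))}"

(* phi(z)/z with its limiting value 1 at z = 0 (for phi in class A) *)
definition quot_z :: "(complex \<Rightarrow> complex) \<Rightarrow> complex \<Rightarrow> complex" where
  "quot_z \<phi> z = (if z = 0 then 1 else \<phi> z / z)"

end

theory Submission
  imports Defs "HOL-Complex_Analysis.Complex_Analysis"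
begin

text \<open>
  Write \<open>L\<close> for the operator \<open>Lop \<gamma> \<delta>\<close>. Since \<open>L(z\<^sup>n\<^sup>+\<^sup>1)\<close> is a constant
  multiple of \<open>z\<^sup>n\<close>, \<open>L(g \<ast> \<phi>) = L g \<ast> Q\<close> with \<open>Q(z) = \<phi>(z)/z\<close>. For \<open>|\<epsilon>| = 1\<close> the
  function \<open>P = L s + \<epsilon> L t\<close> satisfies \<open>Re P > \<lambda>\<close>, and for \<open>0 < \<rho> < 1\<close>, \<open>|u| < 1\<close>
  \<open>2\<pi> (P \<ast> Q)(\<rho>u) = \<integral>\<^sub>0\<^sup>2\<^sup>\<pi> P(u e\<^sup>-\<^sup>i\<^sup>\<theta>) (2 Re Q(\<rho>e\<^sup>i\<^sup>\<theta>) - 1) d\<theta>\<close>,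
  where \<open>Q(0) = 1\<close> and \<open>Re Q > 1/2\<close> make the kernel positive with mean \<open>1\<close>.
  Hence \<open>Re (P \<ast> Q) > \<lambda>\<close>, and choosing \<open>\<epsilon>\<close> to turn \<open>L(t \<ast> \<phi>)(z)\<close> onto the negative
  real axis gives \<open>Re L(s \<ast> \<phi>)(z) - \<lambda> > |L(t \<ast> \<phi>)(z)|\<close>.
\<close>

section \<open>Integrals over the circle\<close>

lemma has_integral_cis_int_mult:
  fixes k :: int
  shows "((\<lambda>\<theta>. cis (of_int k * \<theta>)) has_integral (if k = 0 then of_real (2*pi) else 0)) {0..2*pi}"
proof (cases "k = 0")
  case True
  then show ?thesis using has_integral_const_real[of "1::complex" 0 "2*pi"]
    by (simp add: scaleR_conv_of_real)
next
  case False
  define F where "F = (\<lambda>x::complex. exp (\<i> * of_int k * x) / (\<i> * of_int k))"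
  have "((\<lambda>x. F (of_real x)) has_vector_derivative cis (of_int k * \<theta>)) (at \<theta> within {0..2*pi})"
    for \<theta>
  proof -
    have "(F has_field_derivative exp (\<i> * of_int k * of_real \<theta>)) (at (of_real \<theta>))"
      unfolding F_def using False by (auto intro!: derivative_eq_intros simp: field_simps)
    then show ?thesis
      by (auto dest: has_vector_derivative_real_field simp: cis_conv_exp mult_ac)
  qed
  then have "((\<lambda>\<theta>. cis (of_int k * \<theta>)) has_integral (F (of_real (2*pi)) - F (of_real 0)))
             {0..2*pi}"
    by (intro fundamental_theorem_of_calculus) auto
  moreover have "exp (\<i> * of_int k * of_real (2*pi)) = 1"
    using exp_integer_2pi[of "of_int k"] by (simp add: mult_ac)
  ultimately show ?thesis using False by (simp add: F_def)
qed

lemma has_integral_power_cis_mult_power_cis_neg: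
  fixes a b :: complex
  shows "((\<lambda>\<theta>. (a * cis \<theta>) ^ n * (b * cis (-\<theta>)) ^ m) has_integral
           (if n = m then of_real (2*pi) * (a ^ n * b ^ m) else 0)) {0..2*pi}"
proof -
  have "cis \<theta> ^ n * cis (-\<theta>) ^ m = cis (of_int (int n - int m) * \<theta>)" for \<theta>
    by (simp add: Complex.DeMoivre cis_mult algebra_simps)
  then have "(a * cis \<theta>) ^ n * (b * cis (-\<theta>)) ^ m
        = (a ^ n * b ^ m) * cis (of_int (int n - int m) * \<theta>)" for \<theta>
    by (simp add: power_mult_distrib mult_ac)
  then have "((\<lambda>\<theta>. (a * cis \<theta>) ^ n * (b * cis (-\<theta>)) ^ m) has_integral
           (a ^ n * b ^ m) * (if int n - int m = 0 then of_real (2*pi) else 0)) {0..2*pi}"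
    by (simp only:) (rule has_integral_mult_right[OF has_integral_cis_int_mult])
  then show ?thesis by (cases "n = m") (simp_all add: mult.commute)
qed

lemma has_integral_power_cis_neg_mult_power_cis_neg:
  fixes a b :: complex
  shows "((\<lambda>\<theta>. (a * cis (-\<theta>)) ^ n * (b * cis (-\<theta>)) ^ m) has_integral
           (if n = 0 \<and> m = 0 then of_real (2*pi) else 0)) {0..2*pi}"
proof -
  have "cis (-\<theta>) ^ n * cis (-\<theta>) ^ m = cis (of_int (- int n - int m) * \<theta>)" for \<theta>
    by (simp add: Complex.DeMoivre cis_mult) (simp add: algebra_simps)
  then have "(a * cis (-\<theta>)) ^ n * (b * cis (-\<theta>)) ^ m
        = (a ^ n * b ^ m) * cis (of_int (- int n - int m) * \<theta>)" for \<theta>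
    by (simp add: power_mult_distrib mult_ac)
  then have "((\<lambda>\<theta>. (a * cis (-\<theta>)) ^ n * (b * cis (-\<theta>)) ^ m) has_integral
           (a ^ n * b ^ m) * (if - int n - int m = 0 then of_real (2*pi) else 0)) {0..2*pi}"
    by (simp only:) (rule has_integral_mult_right[OF has_integral_cis_int_mult])
  then show ?thesis by (cases "n = 0 \<and> m = 0") (auto simp: mult.commute)
qed

lemma has_integral_powser_mult:
  fixes c :: "nat \<Rightarrow> complex" and e w :: "real \<Rightarrow> complex"
  assumes sc: "summable (\<lambda>n. norm (c n) * r ^ n)"
    and ce: "continuous_on {a..b} e" and cw: "continuous_on {a..b} w"
    and er: "\<And>\<theta>. \<theta> \<in> {a..b} \<Longrightarrow> norm (e \<theta>) \<le> r"
    and J: "\<And>n. ((\<lambda>\<theta>. e \<theta> ^ n * w \<theta>) has_integral J n) {a..b}"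
  shows "((\<lambda>\<theta>. (\<Sum>n. c n * e \<theta> ^ n) * w \<theta>) has_integral (\<Sum>n. c n * J n)) {a..b}"
proof -
  obtain B where B: "\<And>\<theta>. \<theta> \<in> {a..b} \<Longrightarrow> norm (w \<theta>) \<le> B"
    using compact_continuous_image[OF cw compact_Icc] by (meson bounded_iff compact_imp_bounded imageI)
  define f where "f = (\<lambda>i \<theta>. c i * e \<theta> ^ i * w \<theta>)"
  have "norm (f i \<theta>) \<le> norm (c i) * r ^ i * B" if "\<theta> \<in> {a..b}" for i \<theta>
    unfolding f_def norm_mult norm_power
    using er[OF that] B[OF that] order_trans[OF norm_ge_zero er[OF that]]
    by (intro mult_mono mult_left_mono power_mono) auto
  then have "uniform_limit {a..b} (\<lambda>N \<theta>. \<Sum>i<N. f i \<theta>) (\<lambda>\<theta>. \<Sum>i. f i \<theta>) sequentially"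
    by (rule Weierstrass_m_test) (use sc in \<open>auto intro: summable_mult2\<close>)
  moreover have "continuous_on {a..b} (\<lambda>\<theta>. \<Sum>i<N. f i \<theta>)" for N
    unfolding f_def by (intro continuous_intros cw ce)
  ultimately obtain I K where I: "\<And>N. ((\<lambda>\<theta>. \<Sum>i<N. f i \<theta>) has_integral I N) {a..b}"
    and K: "((\<lambda>\<theta>. \<Sum>i. f i \<theta>) has_integral K) {a..b}" and lim: "I \<longlonglongrightarrow> K"
    by (rule uniform_limit_integral) auto
  have "(f i has_integral c i * J i) {a..b}" for i
    using has_integral_mult_right[OF J[of i], of "c i"] by (simp add: f_def mult.assoc)
  then have "I = (\<lambda>N. \<Sum>i<N. c i * J i)"
    using has_integral_unique[OF I has_integral_sum] by auto
  with lim have K_eq: "K = (\<Sum>n. c n * J n)"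
    by (simp add: sums_def sums_unique)
  have "(\<Sum>i. f i \<theta>) = (\<Sum>n. c n * e \<theta> ^ n) * w \<theta>" if "\<theta> \<in> {a..b}" for \<theta>
  proof -
    have "summable (\<lambda>n. c n * e \<theta> ^ n)"
      by (rule summable_comparison_test[OF _ sc])
         (use er[OF that] in \<open>auto simp: norm_mult norm_power intro!: mult_left_mono power_mono\<close>)
    then show ?thesis unfolding f_def by (simp add: suminf_mult2)
  qed
  with K K_eq show ?thesis by (metis (no_types, lifting) has_integral_cong)
qed

lemma has_integral_weighted_mean_gt:
  fixes f g :: "real \<Rightarrow> real"
  assumes cf: "continuous_on {a..b} f" and f_gt: "\<And>x. x \<in> {a..b} \<Longrightarrow> f x > c"
    and g_nonneg: "\<And>x. x \<in> {a..b} \<Longrightarrow> g x \<ge> 0" and g: "(g has_integral I) {a..b}" and "I > 0"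
    and fg: "((\<lambda>x. f x * g x) has_integral J) {a..b}"
  shows "J > c * I"
proof -
  have "{a..b} \<noteq> {}" using g \<open>I > 0\<close> by (metis has_integral_empty_eq less_irrefl)
  then obtain x0 where x0: "x0 \<in> {a..b}" "\<And>x. x \<in> {a..b} \<Longrightarrow> f x0 \<le> f x"
    using continuous_attains_inf[OF compact_Icc _ cf] by auto
  have "f x0 * I \<le> J"
    by (rule has_integral_le[OF has_integral_mult_right[OF g] fg])
       (use x0 g_nonneg in \<open>auto intro: mult_right_mono\<close>)
  moreover have "c * I < f x0 * I" using f_gt[OF x0(1)] \<open>I > 0\<close> by simp
  ultimately show ?thesis by linarith
qed

section \<open>Hadamard product of power series\<close>

lemma ereal_less_fps_conv_radius: "fps_conv_radius F \<ge> 1 \<Longrightarrow> x < 1 \<Longrightarrow> ereal x < fps_conv_radius F"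
  by (erule less_le_trans[rotated]) simp

definition fps_hadamard :: "'a::times fps \<Rightarrow> 'a fps \<Rightarrow> 'a fps" where
  "fps_hadamard F G = Abs_fps (\<lambda>n. fps_nth F n * fps_nth G n)"

lemma fps_nth_hadamard [simp]: "fps_nth (fps_hadamard F G) n = fps_nth F n * fps_nth G n"
  by (simp add: fps_hadamard_def)

lemma fps_hadamard_one_left:
  "fps_nth G 0 = 1 \<Longrightarrow> fps_hadamard (1 :: 'a::comm_ring_1 fps) G = 1"
  by (auto simp: fps_eq_iff)

lemma fps_hadamard_add_cmult_left:
  "fps_hadamard (F + fps_const e * G) (Q :: 'a::comm_ring_1 fps)
     = fps_hadamard F Q + fps_const e * fps_hadamard G Q"
  by (simp add: fps_eq_iff algebra_simps)

lemma fps_conv_radius_hadamard: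
  fixes F G :: "complex fps"
  assumes "fps_conv_radius F \<ge> 1" "fps_conv_radius G \<ge> 1"
  shows "fps_conv_radius (fps_hadamard F G) \<ge> 1"
  unfolding fps_conv_radius_def fps_nth_hadamard
proof (rule conv_radius_geI_ex')
  fix r :: real assume r: "0 < r" "ereal r < 1"
  define s where "s = sqrt r"
  have s: "0 < s" "s < 1" "s * s = r" using r by (auto simp: s_def)
  have summable: "summable (\<lambda>n. norm (fps_nth H n * of_real s ^ n))"
    if "fps_conv_radius H \<ge> 1" for H :: "complex fps"
    by (rule norm_summable_fps) (use s that in \<open>simp add: ereal_less_fps_conv_radius\<close>)
  obtain K where K: "\<And>n. norm (norm (fps_nth F n * of_real s ^ n)) \<le> K"
    using summable_imp_Bseq[OF summable[OF assms(1)]] by (elim BseqE) blast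
  \<comment> \<open>the coefficient sequence of \<open>F\<close> is bounded at radius \<open>\<surd>r\<close>, that of \<open>G\<close> summable there\<close>
  have "summable (\<lambda>n. norm (fps_nth F n * fps_nth G n * of_real r ^ n))"
  proof (rule summable_comparison_test[OF _ summable_mult[OF summable[OF assms(2)], of K]])
    have "norm (fps_nth F n * fps_nth G n * of_real r ^ n)
          = norm (fps_nth F n * of_real s ^ n) * norm (fps_nth G n * of_real s ^ n)" for n
      by (simp add: norm_mult norm_power s(3)[symmetric] power_mult_distrib)
    then show "\<exists>N. \<forall>n\<ge>N. norm (norm (fps_nth F n * fps_nth G n * of_real r ^ n))
                 \<le> K * norm (fps_nth G n * of_real s ^ n)"
      using K by (auto intro!: mult_right_mono)
  qed
  then show "summable (\<lambda>n. fps_nth F n * fps_nth G n * of_real r ^ n)"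
    by (rule summable_norm_cancel)
qed

lemma has_integral_power_mult_eval_fps:
  fixes Q :: "complex fps"
  assumes "0 \<le> \<rho>" "ereal \<rho> < fps_conv_radius Q"
  shows "((\<lambda>\<theta>. (u * cis (-\<theta>)) ^ m * eval_fps Q (of_real \<rho> * cis \<theta>)) has_integral
           of_real (2*pi) * (fps_nth Q m * of_real \<rho> ^ m * u ^ m)) {0..2*pi}"
proof -
  have "summable (\<lambda>n. norm (fps_nth Q n) * \<rho> ^ n)"
    using norm_summable_fps[of "of_real \<rho>" Q] assms by (simp add: norm_mult norm_power)
  then have "((\<lambda>\<theta>. (\<Sum>n. fps_nth Q n * (of_real \<rho> * cis \<theta>) ^ n) * (u * cis (-\<theta>)) ^ m)
           has_integral
           (\<Sum>n. fps_nth Q n * (if n = m then of_real (2*pi) * (of_real \<rho> ^ n * u ^ m) else 0)))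
           {0..2*pi}"
    by (rule has_integral_powser_mult[OF _ _ _ _ has_integral_power_cis_mult_power_cis_neg])
       (auto intro!: continuous_intros simp: norm_mult assms(1))
  moreover have "(\<lambda>n. fps_nth Q n * (if n = m then of_real (2*pi) * (of_real \<rho> ^ n * u ^ m) else 0))
      = (\<lambda>n. if n = m then of_real (2*pi) * (fps_nth Q m * of_real \<rho> ^ m * u ^ m) else 0)"
    by (auto simp: mult_ac)
  ultimately show ?thesis
    using sums_single[of m "\<lambda>_. of_real (2*pi) * (fps_nth Q m * of_real \<rho> ^ m * u ^ m)"]
    by (simp add: eval_fps_def sums_iff mult.commute)
qed

lemma has_integral_power_mult_cnj_eval_fps:
  fixes Q :: "complex fps"
  assumes "0 \<le> \<rho>" "ereal \<rho> < fps_conv_radius Q"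
  shows "((\<lambda>\<theta>. (u * cis (-\<theta>)) ^ m * cnj (eval_fps Q (of_real \<rho> * cis \<theta>))) has_integral
           (if m = 0 then of_real (2*pi) * cnj (fps_nth Q 0) else 0)) {0..2*pi}"
proof -
  have "summable (\<lambda>n. norm (cnj (fps_nth Q n)) * \<rho> ^ n)"
    using norm_summable_fps[of "of_real \<rho>" Q] assms by (simp add: norm_mult norm_power)
  then have "((\<lambda>\<theta>. (\<Sum>n. cnj (fps_nth Q n) * (of_real \<rho> * cis (-\<theta>)) ^ n) * (u * cis (-\<theta>)) ^ m)
           has_integral (\<Sum>n. cnj (fps_nth Q n) * (if n = 0 \<and> m = 0 then of_real (2*pi) else 0)))
           {0..2*pi}"
    by (rule has_integral_powser_mult[OF _ _ _ _ has_integral_power_cis_neg_mult_power_cis_neg])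
       (auto intro!: continuous_intros simp: norm_mult assms(1))
  moreover have "(\<lambda>n. cnj (fps_nth Q n) * (if n = 0 \<and> m = 0 then of_real (2*pi) else 0))
      = (\<lambda>n. if n = 0 then (if m = 0 then of_real (2*pi) * cnj (fps_nth Q 0) else 0) else 0)"
    by auto
  moreover have "cnj (eval_fps Q (of_real \<rho> * cis \<theta>))
      = (\<Sum>n. cnj (fps_nth Q n) * (of_real \<rho> * cis (-\<theta>)) ^ n)" for \<theta>
  proof -
    have "(\<lambda>n. fps_nth Q n * (of_real \<rho> * cis \<theta>) ^ n) sums eval_fps Q (of_real \<rho> * cis \<theta>)"
      by (rule sums_eval_fps) (use assms in \<open>simp add: norm_mult\<close>)
    then show ?thesis by (subst (asm) sums_cnj[symmetric]) (simp add: sums_iff cis_cnj)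
  qed
  ultimately show ?thesis
    using sums_single[of 0 "\<lambda>_. if m = 0 then of_real (2*pi) * cnj (fps_nth Q 0) else 0"]
    by (simp add: sums_iff mult.commute)
qed

lemma has_integral_power_mult_kernel:
  fixes Q :: "complex fps"
  assumes "0 \<le> \<rho>" "ereal \<rho> < fps_conv_radius Q" "fps_nth Q 0 = 1"
  shows "((\<lambda>\<theta>. (u * cis (-\<theta>)) ^ m * of_real (2 * Re (eval_fps Q (of_real \<rho> * cis \<theta>)) - 1))
           has_integral of_real (2*pi) * (fps_nth Q m * of_real \<rho> ^ m * u ^ m)) {0..2*pi}"
proof -
  define q where "q = (\<lambda>\<theta>. eval_fps Q (of_real \<rho> * cis \<theta>))"
  have one: "((\<lambda>\<theta>. (u * cis (-\<theta>)) ^ m) has_integral (if m = 0 then of_real (2*pi) else 0))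
             {0..2*pi}"
    using has_integral_power_cis_neg_mult_power_cis_neg[of 1 0 u m] by simp
  have "((\<lambda>\<theta>. (u * cis (-\<theta>)) ^ m * q \<theta> + (u * cis (-\<theta>)) ^ m * cnj (q \<theta>) - (u * cis (-\<theta>)) ^ m)
          has_integral of_real (2*pi) * (fps_nth Q m * of_real \<rho> ^ m * u ^ m)) {0..2*pi}"
    unfolding q_def
    by (rule has_integral_eq_rhs[OF has_integral_diff[OF has_integral_add
          [OF has_integral_power_mult_eval_fps[OF assms(1,2)]
              has_integral_power_mult_cnj_eval_fps[OF assms(1,2)]] one]])
       (simp add: assms(3))
  moreover have "of_real (2 * Re (q \<theta>) - 1) = q \<theta> + cnj (q \<theta>) - 1" for \<theta>
    by (simp add: complex_add_cnj)
  ultimately show ?thesis by (simp add: q_def ring_distribs)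
qed

lemma eval_fps_hadamard_integral:
  fixes P Q :: "complex fps"
  assumes rP: "fps_conv_radius P \<ge> 1" and rQ: "fps_conv_radius Q \<ge> 1" and Q0: "fps_nth Q 0 = 1"
    and \<rho>: "0 < \<rho>" "\<rho> < 1" and u: "norm u < 1"
  shows "((\<lambda>\<theta>. eval_fps P (u * cis (-\<theta>)) * of_real (2 * Re (eval_fps Q (of_real \<rho> * cis \<theta>)) - 1))
          has_integral of_real (2*pi) * eval_fps (fps_hadamard P Q) (of_real \<rho> * u)) {0..2*pi}"
proof -
  have \<rho>Q: "ereal \<rho> < fps_conv_radius Q" using rQ \<rho>(2) by (rule ereal_less_fps_conv_radius)
  have "((\<lambda>\<theta>. eval_fps P (u * cis (-\<theta>)) * of_real (2 * Re (eval_fps Q (of_real \<rho> * cis \<theta>)) - 1))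
          has_integral
          (\<Sum>n. fps_nth P n * (of_real (2*pi) * (fps_nth Q n * of_real \<rho> ^ n * u ^ n)))) {0..2*pi}"
    unfolding eval_fps_def[of P]
    using norm_summable_fps[of u P] rP u \<rho> \<rho>Q
    by (intro has_integral_powser_mult[where r = "norm u"] has_integral_power_mult_kernel Q0)
       (auto intro!: continuous_intros ereal_less_fps_conv_radius simp: norm_mult norm_power)
  moreover have summable: "summable (\<lambda>n. fps_nth (fps_hadamard P Q) n * (of_real \<rho> * u) ^ n)"
  proof (rule summable_fps)
    have "\<rho> * norm u < 1" using mult_left_le_one_le[of "norm u" \<rho>] \<rho> u by simp
    then show "ereal (norm (of_real \<rho> * u)) < fps_conv_radius (fps_hadamard P Q)"
      using fps_conv_radius_hadamard[OF rP rQ] \<rho> by (simp add: norm_mult ereal_less_fps_conv_radius)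
  qed
  then have "(\<lambda>n. fps_nth P n * (of_real (2*pi) * (fps_nth Q n * of_real \<rho> ^ n * u ^ n)))
      sums (of_real (2*pi) * eval_fps (fps_hadamard P Q) (of_real \<rho> * u))"
    using sums_mult[OF summable_sums[OF summable], of "of_real (2*pi)"]
    by (simp add: eval_fps_def power_mult_distrib mult_ac)
  ultimately show ?thesis by (simp add: sums_unique[symmetric])
qed

lemma Re_eval_fps_hadamard_gt:
  fixes P Q :: "complex fps"
  assumes rP: "fps_conv_radius P \<ge> 1" and rQ: "fps_conv_radius Q \<ge> 1" and Q0: "fps_nth Q 0 = 1"
    and ReQ: "\<And>w. norm w < 1 \<Longrightarrow> Re (eval_fps Q w) > 1/2"
    and ReP: "\<And>w. norm w < 1 \<Longrightarrow> Re (eval_fps P w) > c"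
    and z: "norm z < 1"
  shows "Re (eval_fps (fps_hadamard P Q) z) > c"
proof -
  define \<rho> where "\<rho> = (1 + norm z) / 2"
  have \<rho>: "0 < \<rho>" "\<rho> < 1" "norm z < \<rho>" using z by (auto simp: \<rho>_def add_pos_nonneg)
  define u where "u = z / of_real \<rho>"
  have u: "norm u < 1" using \<rho> by (simp add: u_def norm_divide)
  have \<rho>u: "of_real \<rho> * u = z" using \<rho> by (simp add: u_def)
  define kernel where "kernel = (\<lambda>\<theta>. 2 * Re (eval_fps Q (of_real \<rho> * cis \<theta>)) - 1)"
  have "((\<lambda>\<theta>. Re (eval_fps P (u * cis (-\<theta>))) * kernel \<theta>) has_integral
         2*pi * Re (eval_fps (fps_hadamard P Q) z)) {0..2*pi}"
    using has_integral_linear[OF eval_fps_hadamard_integral[OF rP rQ Q0 \<rho>(1,2) u] bounded_linear_Re]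
    by (simp add: o_def kernel_def \<rho>u)
  moreover have "(kernel has_integral 2*pi) {0..2*pi}"
    using has_integral_linear[OF eval_fps_hadamard_integral[OF _ rQ Q0 \<rho>(1,2) u, of 1]
        bounded_linear_Re]
    by (simp add: o_def kernel_def fps_hadamard_one_left[OF Q0])
  moreover have "kernel \<theta> \<ge> 0" for \<theta>
    using ReQ[of "of_real \<rho> * cis \<theta>"] \<rho> by (simp add: kernel_def norm_mult)
  moreover have "continuous_on {0..2*pi} (\<lambda>\<theta>. Re (eval_fps P (u * cis (-\<theta>))))"
    using rP u by (intro continuous_intros) (auto simp: norm_mult ereal_less_fps_conv_radius)
  moreover have "Re (eval_fps P (u * cis (-\<theta>))) > c" for \<theta>
    using ReP[of "u * cis (-\<theta>)"] u by (simp add: norm_mult)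
  ultimately have "2*pi * Re (eval_fps (fps_hadamard P Q) z) > c * (2*pi)"
    by (intro has_integral_weighted_mean_gt[where g = kernel]) auto
  then show ?thesis by simp
qed

section \<open>The operator \<open>Lop\<close> on power series\<close>

text \<open>The three terms are written uniformly as \<open>c X\<^sup>j F\<^sup>(\<^sup>k\<^sup>)\<close> (hence \<open>X\<^sup>0\<close> and \<open>fps_deriv ^^ 1\<close>),
  which lets one radius and one evaluation lemma handle all of them.\<close>

definition fps_Lop :: "real \<Rightarrow> real \<Rightarrow> complex fps \<Rightarrow> complex fps" where
  "fps_Lop \<gamma> \<delta> F = fps_const (of_real \<gamma>) * fps_X ^ 0 * (fps_deriv ^^ 1) F
     + fps_const (of_real \<delta>) * fps_X ^ 1 * (fps_deriv ^^ 2) F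
     + fps_const (of_real ((\<delta> - \<gamma>) / 2)) * fps_X ^ 2 * (fps_deriv ^^ 3) F"

definition Lop_coeff :: "real \<Rightarrow> real \<Rightarrow> nat \<Rightarrow> complex" where
  "Lop_coeff \<gamma> \<delta> n = of_real \<gamma> * (of_nat n + 1) + of_real \<delta> * of_nat n * (of_nat n + 1)
     + of_real ((\<delta> - \<gamma>) / 2) * (of_nat n - 1) * of_nat n * (of_nat n + 1)"

lemma fps_nth_Lop: "fps_nth (fps_Lop \<gamma> \<delta> F) n = Lop_coeff \<gamma> \<delta> n * fps_nth F (n + 1)"
proof -
  have Lop_nth: "fps_nth (fps_Lop \<gamma> \<delta> F) n = of_real \<gamma> * fps_nth (fps_deriv F) n
     + of_real \<delta> * fps_nth (fps_X * fps_deriv (fps_deriv F)) n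
     + of_real ((\<delta> - \<gamma>) / 2) * fps_nth (fps_X ^ 2 * fps_deriv (fps_deriv (fps_deriv F))) n"
    by (simp add: fps_Lop_def numeral_3_eq_3 numeral_2_eq_2 mult.assoc)
  consider "n = 0" | "n = 1" | m where "n = Suc (Suc m)"
    by (metis One_nat_def not0_implies_Suc)
  then show ?thesis
  proof cases
    case 1
    then show ?thesis unfolding Lop_nth by (simp add: Lop_coeff_def fps_X_power_mult_nth)
  next
    case 2
    then show ?thesis unfolding Lop_nth fps_X_power_mult_nth
      by (simp add: Lop_coeff_def algebra_simps)
  next
    case 3
    then show ?thesis unfolding Lop_nth fps_X_power_mult_nth
      by (simp add: Lop_coeff_def of_nat_Suc) (simp add: distrib_right mult.assoc)
  qed
qed

lemma fps_Lop_hadamard: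
  "fps_Lop \<gamma> \<delta> (fps_hadamard F G) = fps_hadamard (fps_Lop \<gamma> \<delta> F) (fps_shift 1 G)"
  by (simp add: fps_eq_iff fps_nth_Lop mult_ac)

lemma fps_conv_radius_funpow_deriv:
  "fps_conv_radius ((fps_deriv ^^ k) F) \<ge> fps_conv_radius (F :: complex fps)"
  by (induction k) (auto intro: order_trans[OF _ fps_conv_radius_deriv])

lemma fps_conv_radius_const_X_power_mult_deriv:
  "fps_conv_radius (fps_const c * fps_X ^ j * (fps_deriv ^^ k) F) \<ge> fps_conv_radius (F :: complex fps)"
  using fps_conv_radius_mult[of "fps_const c * fps_X ^ j" "(fps_deriv ^^ k) F"]
    fps_conv_radius_mult[of "fps_const c" "fps_X ^ j"] fps_conv_radius_funpow_deriv[of F k]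
  by simp

lemma fps_conv_radius_add_ge:
  fixes F G :: "'a::{banach, real_normed_div_algebra} fps"
  assumes "r \<le> fps_conv_radius F" "r \<le> fps_conv_radius G"
  shows "r \<le> fps_conv_radius (F + G)"
  using min.boundedI[OF assms] fps_conv_radius_add by (rule order_trans)

lemma fps_conv_radius_Lop: "fps_conv_radius (fps_Lop \<gamma> \<delta> F) \<ge> fps_conv_radius F"
  unfolding fps_Lop_def by (intro fps_conv_radius_add_ge fps_conv_radius_const_X_power_mult_deriv)

lemma less_fps_conv_radius_add:
  fixes F G :: "'a::{banach, real_normed_div_algebra} fps"
  assumes "norm z < fps_conv_radius F" "norm z < fps_conv_radius G"
  shows "norm z < fps_conv_radius (F + G)"
  using assms fps_conv_radius_add[of F G] by (metis min_less_iff_conj order.strict_trans2)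

lemma higher_deriv_eval_fps:
  fixes F :: "complex fps"
  assumes "norm z < fps_conv_radius F"
  shows "(deriv ^^ k) (eval_fps F) z = eval_fps ((fps_deriv ^^ k) F) z"
  using assms
proof (induction k arbitrary: z)
  case 0
  then show ?case by simp
next
  case (Suc k)
  have "eventually (\<lambda>w. w \<in> eball 0 (fps_conv_radius F)) (nhds z)"
    using Suc.prems by (intro eventually_nhds_in_open) auto
  then have "eventually (\<lambda>w. (deriv ^^ k) (eval_fps F) w = eval_fps ((fps_deriv ^^ k) F) w) (nhds z)"
    by eventually_elim (use Suc.IH in auto)
  then have "(deriv ^^ Suc k) (eval_fps F) z = deriv (eval_fps ((fps_deriv ^^ k) F)) z"
    by (simp add: deriv_cong_ev)
  also have "\<dots> = eval_fps ((fps_deriv ^^ Suc k) F) z"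
    using Suc.prems fps_conv_radius_funpow_deriv[of F k]
    by (simp add: eval_fps_deriv order.strict_trans2)
  finally show ?case .
qed

lemma eval_fps_const_X_power_mult:
  fixes F :: "complex fps"
  assumes "norm z < fps_conv_radius F"
  shows "eval_fps (fps_const c * fps_X ^ k * F) z = c * z ^ k * eval_fps F z"
  using fps_conv_radius_mult[of "fps_const c" "fps_X ^ k"] assms
  by (simp add: eval_fps_mult)

lemma Lop_eval_fps:
  fixes F :: "complex fps"
  assumes z: "norm z < fps_conv_radius F"
  shows "Lop \<gamma> \<delta> (eval_fps F) z = eval_fps (fps_Lop \<gamma> \<delta> F) z"
proof -
  have r: "norm z < fps_conv_radius ((fps_deriv ^^ k) F)" for k
    using z fps_conv_radius_funpow_deriv by (rule order.strict_trans2)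
  have rT: "norm z < fps_conv_radius (fps_const c * fps_X ^ j * (fps_deriv ^^ k) F)" for c j k
    using z fps_conv_radius_const_X_power_mult_deriv by (rule order.strict_trans2)
  have "eval_fps (fps_Lop \<gamma> \<delta> F) z
      = of_real \<gamma> * z ^ 0 * eval_fps ((fps_deriv ^^ 1) F) z
        + of_real \<delta> * z ^ 1 * eval_fps ((fps_deriv ^^ 2) F) z
        + of_real ((\<delta> - \<gamma>) / 2) * z ^ 2 * eval_fps ((fps_deriv ^^ 3) F) z"
    unfolding fps_Lop_def
    by (simp only: eval_fps_add rT less_fps_conv_radius_add eval_fps_const_X_power_mult r)
  also have "\<dots> = Lop \<gamma> \<delta> (eval_fps F) z"
    unfolding higher_deriv_eval_fps[OF z, symmetric] by (simp add: Lop_def)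
  finally show ?thesis ..
qed

lemma Lop_cong_ev:
  assumes "eventually (\<lambda>w. f w = g w) (nhds z)"
  shows "Lop \<gamma> \<delta> f z = Lop \<gamma> \<delta> g z"
  using higher_deriv_cong_ev[OF assms refl, of 1] higher_deriv_cong_ev[OF assms refl, of 2]
    higher_deriv_cong_ev[OF assms refl, of 3]
  by (simp add: Lop_def)

section \<open>Functions on the unit disc\<close>

lemma fps_conv_radius_expansion_unit_disc:
  "g holomorphic_on ball 0 1 \<Longrightarrow> fps_conv_radius (fps_expansion g 0) \<ge> 1"
  using conv_radius_fps_expansion[of g 0 1] by (simp add: one_ereal_def)

lemma eval_fps_expansion_unit_disc:
  "g holomorphic_on ball 0 1 \<Longrightarrow> norm z < 1 \<Longrightarrow> eval_fps (fps_expansion g 0) z = g z"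
  using eval_fps_expansion'[of g 0 1 z] by (simp add: one_ereal_def)

lemma taylor_coeff_eq_fps_nth_expansion: "taylor_coeff g = fps_nth (fps_expansion g 0)"
  by (simp add: fun_eq_iff taylor_coeff_def fps_expansion_def)

lemma hadamard_eq_eval_fps:
  "hadamard g h = eval_fps (fps_hadamard (fps_expansion g 0) (fps_expansion h 0))"
  by (simp add: fun_eq_iff hadamard_def eval_fps_def taylor_coeff_eq_fps_nth_expansion)

lemma fps_conv_radius_hadamard_expansion:
  assumes "g holomorphic_on ball 0 1" "h holomorphic_on ball 0 1"
  shows "fps_conv_radius (fps_hadamard (fps_expansion g 0) (fps_expansion h 0)) \<ge> 1"
  using assms by (intro fps_conv_radius_hadamard fps_conv_radius_expansion_unit_disc)

lemma hadamard_holomorphic_on_unit_disc: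
  assumes "g holomorphic_on ball 0 1" "h holomorphic_on ball 0 1"
  shows "hadamard g h holomorphic_on ball 0 1"
  unfolding hadamard_eq_eval_fps
  using fps_conv_radius_hadamard_expansion[OF assms]
  by (intro holomorphic_on_eval_fps) (auto simp: dist_norm ereal_less_fps_conv_radius)

lemma fps_nth_expansion_0_1:
  "fps_nth (fps_expansion g 0) 0 = g 0" "fps_nth (fps_expansion g 0) 1 = deriv g 0"
  by (simp_all add: fps_expansion_def)

lemma hadamard_at_0: "hadamard g h 0 = g 0 * h 0"
  by (simp add: hadamard_eq_eval_fps eval_fps_at_0 fps_nth_expansion_0_1)

lemma deriv_hadamard_at_0:
  assumes "g holomorphic_on ball 0 1" "h holomorphic_on ball 0 1"
  shows "deriv (hadamard g h) 0 = deriv g 0 * deriv h 0"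
proof -
  define H where "H = fps_hadamard (fps_expansion g 0) (fps_expansion h 0)"
  have "norm (0::complex) < fps_conv_radius H"
    using fps_conv_radius_hadamard_expansion[OF assms] unfolding H_def
    by (rule ereal_less_fps_conv_radius) simp
  then have "deriv (eval_fps H) 0 = fps_nth H 1"
    using higher_deriv_eval_fps[of 0 H 1] by (simp add: eval_fps_at_0)
  then show ?thesis
    unfolding hadamard_eq_eval_fps H_def fps_nth_hadamard fps_nth_expansion_0_1 .
qed

lemma hadamard_in_class_H0:
  assumes "(s, t) \<in> class_H0" "\<phi> \<in> class_A"
  shows "(hadamard s \<phi>, hadamard t \<phi>) \<in> class_H0"
  using assms
  by (simp add: class_H0_def class_A_def unit_disc_def hadamard_holomorphic_on_unit_disc
      hadamard_at_0 deriv_hadamard_at_0)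

lemma Lop_eq_eval_fps_Lop:
  assumes "g holomorphic_on ball 0 1" "norm z < 1"
  shows "Lop \<gamma> \<delta> g z = eval_fps (fps_Lop \<gamma> \<delta> (fps_expansion g 0)) z"
proof -
  have "eventually (\<lambda>w. w \<in> ball 0 1) (nhds z)"
    using assms(2) by (intro eventually_nhds_in_open) auto
  then have "eventually (\<lambda>w. g w = eval_fps (fps_expansion g 0) w) (nhds z)"
    by eventually_elim (use assms(1) eval_fps_expansion_unit_disc in auto)
  then have "Lop \<gamma> \<delta> g z = Lop \<gamma> \<delta> (eval_fps (fps_expansion g 0)) z"
    by (rule Lop_cong_ev)
  also have "\<dots> = eval_fps (fps_Lop \<gamma> \<delta> (fps_expansion g 0)) z"
    using fps_conv_radius_expansion_unit_disc[OF assms(1)] assms(2)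
    by (intro Lop_eval_fps ereal_less_fps_conv_radius)
  finally show ?thesis .
qed

lemma Lop_hadamard_eq:
  assumes "g holomorphic_on ball 0 1" "\<phi> holomorphic_on ball 0 1" "norm z < 1"
  shows "Lop \<gamma> \<delta> (hadamard g \<phi>) z
       = eval_fps (fps_hadamard (fps_Lop \<gamma> \<delta> (fps_expansion g 0)) (fps_shift 1 (fps_expansion \<phi> 0))) z"
proof -
  have "norm z < fps_conv_radius (fps_hadamard (fps_expansion g 0) (fps_expansion \<phi> 0))"
    using fps_conv_radius_hadamard_expansion[OF assms(1,2)] assms(3)
    by (rule ereal_less_fps_conv_radius)
  then show ?thesis by (simp add: hadamard_eq_eval_fps Lop_eval_fps fps_Lop_hadamard)
qed

lemma eval_fps_shift_expansion:
  assumes "\<phi> \<in> class_A" "norm w < 1"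
  shows "eval_fps (fps_shift 1 (fps_expansion \<phi> 0)) w = quot_z \<phi> w"
proof -
  have \<phi>: "\<phi> holomorphic_on ball 0 1" "\<phi> 0 = 0" "deriv \<phi> 0 = 1"
    using assms(1) by (auto simp: class_A_def unit_disc_def)
  have nth_1: "fps_nth (fps_expansion \<phi> 0) 1 = 1"
    using \<phi>(3) fps_nth_expansion_0_1(2)[of \<phi>] by simp
  then have "fps_expansion \<phi> 0 \<noteq> 0" by auto
  then have "1 \<le> subdegree (fps_expansion \<phi> 0)"
    by (rule subdegree_geI) (use \<phi>(2) in \<open>simp add: fps_nth_expansion_0_1\<close>)
  moreover have "norm w < fps_conv_radius (fps_expansion \<phi> 0)"
    using fps_conv_radius_expansion_unit_disc[OF \<phi>(1)] assms(2) by (rule ereal_less_fps_conv_radius)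
  ultimately show ?thesis
    using \<phi> assms(2) nth_1 by (simp add: eval_fps_shift eval_fps_expansion_unit_disc quot_z_def)
qed

lemma eval_fps_add_cmult:
  fixes F G :: "complex fps"
  assumes "norm z < fps_conv_radius F" "norm z < fps_conv_radius G"
  shows "eval_fps (F + fps_const e * G) z = eval_fps F z + e * eval_fps G z"
proof -
  have "norm z < fps_conv_radius (fps_const e * G)"
    using assms(2) fps_conv_radius_mult[of "fps_const e" G] by (simp add: order.strict_trans2)
  then show ?thesis using assms by (simp add: eval_fps_add eval_fps_mult)
qed

lemma fps_conv_radius_Lop_expansion:
  "g holomorphic_on ball 0 1 \<Longrightarrow> fps_conv_radius (fps_Lop \<gamma> \<delta> (fps_expansion g 0)) \<ge> 1"
  using fps_conv_radius_Lop fps_conv_radius_expansion_unit_disc by (blast intro: order_trans)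

lemma eval_fps_Lop_add_cmult:
  assumes "s holomorphic_on ball 0 1" "t holomorphic_on ball 0 1" "norm w < 1"
  shows "eval_fps (fps_Lop \<gamma> \<delta> (fps_expansion s 0) + fps_const e * fps_Lop \<gamma> \<delta> (fps_expansion t 0)) w
       = Lop \<gamma> \<delta> s w + e * Lop \<gamma> \<delta> t w"
  using assms
  by (simp add: eval_fps_add_cmult ereal_less_fps_conv_radius fps_conv_radius_Lop_expansion
      Lop_eq_eval_fps_Lop)

lemma Lop_hadamard_add_cmult:
  assumes "s holomorphic_on ball 0 1" "t holomorphic_on ball 0 1" "\<phi> holomorphic_on ball 0 1"
    and "norm z < 1"
  shows "eval_fps (fps_hadamard (fps_Lop \<gamma> \<delta> (fps_expansion s 0) + fps_const e * fps_Lop \<gamma> \<delta> (fps_expansion t 0))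
                     (fps_shift 1 (fps_expansion \<phi> 0))) z
       = Lop \<gamma> \<delta> (hadamard s \<phi>) z + e * Lop \<gamma> \<delta> (hadamard t \<phi>) z"
  using assms
  by (simp add: fps_hadamard_add_cmult_left eval_fps_add_cmult ereal_less_fps_conv_radius
      fps_conv_radius_hadamard fps_conv_radius_Lop_expansion fps_conv_radius_expansion_unit_disc
      Lop_hadamard_eq)

lemma Re_Lop_hadamard_add_rotation_gt:
  fixes s t \<phi> :: "complex \<Rightarrow> complex" and c :: real
  assumes s: "s holomorphic_on ball 0 1" and t: "t holomorphic_on ball 0 1"
    and st: "\<And>w. norm w < 1 \<Longrightarrow> Re (Lop \<gamma> \<delta> s w) - c > cmod (Lop \<gamma> \<delta> t w)"
    and \<phi>: "\<phi> \<in> class_A" and Re\<phi>: "\<And>w. norm w < 1 \<Longrightarrow> Re (quot_z \<phi> w) > 1/2"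
    and e: "norm e = 1" and z: "norm z < 1"
  shows "Re (Lop \<gamma> \<delta> (hadamard s \<phi>) z + e * Lop \<gamma> \<delta> (hadamard t \<phi>) z) > c"
proof -
  have \<phi>_holo: "\<phi> holomorphic_on ball 0 1" and "deriv \<phi> 0 = 1"
    using \<phi> by (auto simp: class_A_def unit_disc_def)
  define P where "P = fps_Lop \<gamma> \<delta> (fps_expansion s 0) + fps_const e * fps_Lop \<gamma> \<delta> (fps_expansion t 0)"
  define Q where "Q = fps_shift 1 (fps_expansion \<phi> 0)"
  have "e \<noteq> 0" using e by auto
  then have "fps_conv_radius P \<ge> 1"
    using fps_conv_radius_Lop_expansion[OF s] fps_conv_radius_Lop_expansion[OF t] unfolding P_def
    by (intro fps_conv_radius_add_ge) (simp_all add: fps_conv_radius_cmult_left)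
  moreover have "fps_conv_radius Q \<ge> 1"
    using fps_conv_radius_expansion_unit_disc[OF \<phi>_holo] by (simp add: Q_def)
  moreover have "fps_nth Q 0 = 1"
    using fps_nth_expansion_0_1(2)[of \<phi>] \<open>deriv \<phi> 0 = 1\<close> by (simp add: Q_def)
  moreover have "Re (eval_fps Q w) > 1/2" if "norm w < 1" for w
    using Re\<phi>[OF that] eval_fps_shift_expansion[OF \<phi> that] by (simp add: Q_def)
  moreover have "Re (eval_fps P w) > c" if w: "norm w < 1" for w
  proof -
    have "Re (e * Lop \<gamma> \<delta> t w) \<ge> - cmod (Lop \<gamma> \<delta> t w)"
      using abs_Re_le_cmod[of "e * Lop \<gamma> \<delta> t w"] e by (simp add: norm_mult)
    then show ?thesis using st[OF w] by (simp add: P_def eval_fps_Lop_add_cmult[OF s t w])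
  qed
  ultimately have "Re (eval_fps (fps_hadamard P Q) z) > c"
    by (intro Re_eval_fps_hadamard_gt z)
  then show ?thesis unfolding P_def Q_def Lop_hadamard_add_cmult[OF s t \<phi>_holo z] .
qed

lemma Re_diff_gt_norm_if_rotations:
  fixes X Y :: complex and c :: real
  assumes "\<And>e. norm e = 1 \<Longrightarrow> Re (X + e * Y) > c"
  shows "Re X - c > norm Y"
proof (cases "Y = 0")
  case True
  then show ?thesis using assms[of 1] by simp
next
  case False
  define e where "e = - cnj Y / of_real (norm Y)"
  have "norm e = 1" using False by (simp add: e_def norm_divide)
  moreover have "Y * cnj Y = of_real (norm Y) * of_real (norm Y)"
    by (simp add: complex_norm_square[symmetric] power2_eq_square)
  then have "e * Y = - of_real (norm Y)"
    using False by (simp add: e_def mult.commute)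
  ultimately show ?thesis using assms[of e] by simp
qed

theorem theorem17:
  fixes \<gamma> \<delta> lam :: real and s t \<phi> :: "complex \<Rightarrow> complex"
  assumes "0 \<le> lam" and "lam < \<gamma>" and "\<gamma> \<le> \<delta>"
    and "(s, t) \<in> class_RH0 \<gamma> \<delta> lam"
    and "\<phi> \<in> class_A"
    and "\<forall>z\<in>unit_disc. Re (quot_z \<phi> z) > 1 / 2"
  shows "(hadamard s \<phi>, hadamard t \<phi>) \<in> class_RH0 \<gamma> \<delta> lam"
proof -
  from assms(4) have H0: "(s, t) \<in> class_H0"
    and st: "\<And>w. norm w < 1 \<Longrightarrow> Re (Lop \<gamma> \<delta> s w) - lam > cmod (Lop \<gamma> \<delta> t w)"
    by (auto simp: class_RH0_def unit_disc_def)
  from H0 have s: "s holomorphic_on ball 0 1" and t: "t holomorphic_on ball 0 1"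
    by (auto simp: class_H0_def unit_disc_def)
  have Re\<phi>: "\<And>w. norm w < 1 \<Longrightarrow> Re (quot_z \<phi> w) > 1/2"
    using assms(6) by (auto simp: unit_disc_def)
  have "Re (Lop \<gamma> \<delta> (hadamard s \<phi>) z) - lam > cmod (Lop \<gamma> \<delta> (hadamard t \<phi>) z)"
    if "norm z < 1" for z
    by (rule Re_diff_gt_norm_if_rotations)
       (rule Re_Lop_hadamard_add_rotation_gt[OF s t st assms(5) Re\<phi> _ that])
  with hadamard_in_class_H0[OF H0 assms(5)] show ?thesis
    by (auto simp: class_RH0_def unit_disc_def)
qed

end
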